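(* Let $\mu^\ast$ be an upper quasi-density on $\mathbb{H}$ and $\mu_\ast(X):=1-\mu^\ast(\mathbb{H}\setminus X)$ the associated lower quasi-density. Then both $\mu^\ast$ and $\mu_\ast$ have the weak Darboux property: for $f\in\{\mu^\ast,\mu_\ast\}$, every $X\subseteq\mathbb{H}$ and every $a\in[f(\emptyset),f(X)]$, there exists $A\subseteq X$ with $f(A)=a$.
   Context: $\mathbb{N}=\{0,1,2,\dots\}$, $\mathbb{N}^+=\{1,2,\dots\}$; $\mathbb{H}$ is one of $\mathbb{Z},\mathbb{N},\mathbb{N}^+$. For $X\subseteq\mathbb{H}$, $k\in\mathbb{N}^+$, $h\in\mathbb{N}$, $k\cdot X+h:=\{kx+h:x\in X\}$. An upper quasi-density on $\mathbb{H}$ is a function $\mu^\ast:\mathcal{P}(\mathbb{H})\to\mathbb{R}$ with $\mu^\ast(\mathbb{H})=1$, $\mu^\ast(X)\le1$ for all $X$, $\mu^\ast(X\cup Y)\le\mu^\ast(X)+\mu^\ast(Y)$ for all $X,Y$, and $\mu^\ast(k\cdot X+h)=\frac1k\mu^\ast(X)$ for all $X\subseteq\mathbb{H}$, $h,k\in\mathbb{N}^+$. *)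

theory Defs
  imports Complex_Main
begin

text \<open>The ambient set H is one of Z, N, N+, all represented as subsets of int.\<close>
definition admissible_H :: "int set \<Rightarrow> bool" where
  "admissible_H H \<longleftrightarrow> H = UNIV \<or> H = {0..} \<or> H = {1..}"

definition dil :: "int \<Rightarrow> int \<Rightarrow> int set \<Rightarrow> int set" where
  "dil k h X = (\<lambda>x. k * x + h) ` X"

definition upper_quasi_density :: "int set \<Rightarrow> (int set \<Rightarrow> real) \<Rightarrow> bool" where
  "upper_quasi_density H \<mu> \<longleftrightarrow>
     \<mu> H = 1 \<and>
     (\<forall>X. X \<subseteq> H \<longrightarrow> \<mu> X \<le> 1) \<and>
     (\<forall>X Y. X \<subseteq> H \<longrightarrow> Y \<subseteq> H \<longrightarrow> \<mu> (X \<union> Y) \<le> \<mu> X + \<mu> Y) \<and>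
     (\<forall>X h k. X \<subseteq> H \<longrightarrow> h \<ge> 1 \<longrightarrow> k \<ge> 1 \<longrightarrow> \<mu> (dil k h X) = \<mu> X / real_of_int k)"

definition lower_qd :: "int set \<Rightarrow> (int set \<Rightarrow> real) \<Rightarrow> int set \<Rightarrow> real" where
  "lower_qd H \<mu> X = 1 - \<mu> (H - X)"

definition weak_darboux :: "int set \<Rightarrow> (int set \<Rightarrow> real) \<Rightarrow> bool" where
  "weak_darboux H f \<longleftrightarrow>
     (\<forall>X a. X \<subseteq> H \<longrightarrow> f {} \<le> a \<longrightarrow> a \<le> f X \<longrightarrow> (\<exists>A. A \<subseteq> X \<and> f A = a))"

end

theory Submission
  imports Defs
begin

text \<open>Attach to every integer x the nested dyadic intervals
  [r/2^n, (r+1)/2^n], where r is the reversal of the n lowest binary digits of x,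
  and let A_t consist of those x \<in> X having one of these intervals below t.
  Then A_0 = {}, A_1 = X, and for t < t' \<le> t + 2^-N the increment A_t' - A_t lies in
  at most two residue classes modulo 2^N. Dilation invariance bounds the upper
  quasi-density of a residue class modulo m by 1/m, so t \<mapsto> \<mu>*(A_t) and
  t \<mapsto> \<mu>_*(A_t) have uniformly small upward jumps, and an intermediate value
  argument on [0,1] yields the required subsets.\<close>

fun reversed_bits :: "nat \<Rightarrow> int \<Rightarrow> int" where
  "reversed_bits 0 x = 0"
| "reversed_bits (Suc n) x = 2 * reversed_bits n x + x div 2^n mod 2"

lemma reversed_bits_eq_imp_mod_eq:
  "reversed_bits n x = reversed_bits n y \<Longrightarrow> x mod 2^n = y mod 2^n"
proof (induction n)
  case (Suc n)
  have binary_digit_unique: "a = c \<and> b = d"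
    if "2 * a + b = 2 * c + d" "0 \<le> b" "b < 2" "0 \<le> d" "d < 2" for a b c d :: int
    using that by presburger
  have "reversed_bits n x = reversed_bits n y \<and> x div 2^n mod 2 = y div 2^n mod 2"
    using Suc.prems by (intro binary_digit_unique) auto
  moreover have "z mod 2^Suc n = 2^n * (z div 2^n mod 2) + z mod 2^n" for z :: int
    using mod_mult2_eq'[of z "2^n" 2] by (simp add: mult.commute)
  ultimately show ?case using Suc.IH by simp
qed simp

definition dyadic_lower :: "nat \<Rightarrow> int \<Rightarrow> real" where
  "dyadic_lower n x = reversed_bits n x / 2^n"

definition dyadic_upper :: "nat \<Rightarrow> int \<Rightarrow> real" where
  "dyadic_upper n x = (reversed_bits n x + 1) / 2^n"

lemma dyadic_lower_mono: "m \<le> n \<Longrightarrow> dyadic_lower m x \<le> dyadic_lower n x"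
proof (rule lift_Suc_mono_le[of "\<lambda>n. dyadic_lower n x"])
  fix n
  have "real_of_int (2 * reversed_bits n x) \<le> reversed_bits (Suc n) x"
    by (simp only: of_int_le_iff) simp
  then show "dyadic_lower n x \<le> dyadic_lower (Suc n) x"
    unfolding dyadic_lower_def by (simp add: field_simps)
qed

lemma dyadic_upper_antimono: "m \<le> n \<Longrightarrow> dyadic_upper n x \<le> dyadic_upper m x"
proof (rule lift_Suc_antimono_le[of "\<lambda>n. dyadic_upper n x"])
  fix n
  have "x div 2^n mod 2 < 2" by simp
  then have "reversed_bits (Suc n) x + 1 \<le> 2 * reversed_bits n x + 2" by simp
  then have "real_of_int (reversed_bits (Suc n) x + 1) \<le> real_of_int (2 * reversed_bits n x + 2)"
    by (simp only: of_int_le_iff)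
  then show "dyadic_upper (Suc n) x \<le> dyadic_upper n x"
    unfolding dyadic_upper_def by (simp add: field_simps)
qed

lemma dyadic_lower_less_upper: "dyadic_lower m x < dyadic_upper n x"
proof -
  have "dyadic_lower k x < dyadic_upper k x" for k
    unfolding dyadic_lower_def dyadic_upper_def by (simp add: divide_strict_right_mono)
  then show ?thesis
    using dyadic_lower_mono[of m "max m n" x] dyadic_upper_antimono[of n "max m n" x]
    by (meson max.cobounded1 max.cobounded2 order_le_less_trans order_less_le_trans)
qed

definition dyadic_cut :: "int set \<Rightarrow> real \<Rightarrow> int set" where
  "dyadic_cut X t = {x \<in> X. \<exists>n. dyadic_upper n x \<le> t}"

lemma dyadic_cut_subset: "dyadic_cut X t \<subseteq> X"
  unfolding dyadic_cut_def by auto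

lemma dyadic_cut_mono: "t \<le> t' \<Longrightarrow> dyadic_cut X t \<subseteq> dyadic_cut X t'"
  unfolding dyadic_cut_def by (auto intro: order_trans)

lemma dyadic_cut_0: "dyadic_cut X 0 = {}"
  using dyadic_lower_less_upper[of 0] unfolding dyadic_cut_def dyadic_lower_def
  by (auto simp: not_le)

lemma dyadic_cut_1: "dyadic_cut X 1 = X"
proof -
  have "dyadic_upper 0 x \<le> 1" for x by (simp add: dyadic_upper_def)
  then show ?thesis unfolding dyadic_cut_def by blast
qed

lemma reversed_bits_on_dyadic_cut_increment:
  assumes "t < t'" "t' \<le> t + 1/2^N" "x \<in> dyadic_cut X t' - dyadic_cut X t"
  shows "reversed_bits N x \<in> {\<lfloor>t * 2^N\<rfloor>, \<lfloor>t * 2^N\<rfloor> + 1}"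
proof -
  from assms(3) obtain n where "dyadic_upper n x \<le> t'" "t < dyadic_upper N x"
    unfolding dyadic_cut_def by (auto simp: not_le)
  then have "dyadic_lower N x < t'"
    using dyadic_lower_less_upper[of N x n] by linarith
  then have "reversed_bits N x < t * 2^N + 1"
    using assms(2) by (simp add: dyadic_lower_def divide_less_eq field_simps)
  moreover have "t * 2^N < reversed_bits N x + 1"
    using \<open>t < dyadic_upper N x\<close> by (simp add: dyadic_upper_def less_divide_eq)
  ultimately show ?thesis by simp linarith
qed

lemma intermediate_value_small_upward_jumps:
  fixes f :: "real \<Rightarrow> real"
  assumes jumps: "\<And>\<epsilon>. 0 < \<epsilon> \<Longrightarrow> \<exists>\<delta>>0. \<forall>t t'. 0 \<le> t \<longrightarrow> t < t' \<longrightarrow> t' \<le> 1 \<longrightarrow>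
      t' \<le> t + \<delta> \<longrightarrow> f t' \<le> f t + \<epsilon>"
    and "f 0 \<le> a" "a \<le> f 1"
  shows "\<exists>t. 0 \<le> t \<and> t \<le> 1 \<and> f t = a"
proof -
  define T where "T = {t. 0 \<le> t \<and> t \<le> 1 \<and> a \<le> f t}"
  define s where "s = Inf T"
  have "1 \<in> T" using assms(3) unfolding T_def by simp
  have bdd: "bdd_below T" unfolding T_def by (rule bdd_belowI[of _ 0]) auto
  have "0 \<le> s" unfolding s_def using \<open>1 \<in> T\<close> by (intro cInf_greatest) (auto simp: T_def)
  have "s \<le> 1" unfolding s_def using \<open>1 \<in> T\<close> bdd by (rule cInf_lower)
  have above: "a \<le> f s + \<epsilon>" if "0 < \<epsilon>" for \<epsilon>
  proof -
    obtain \<delta> where "\<delta> > 0" and \<delta>: "\<forall>t t'. 0 \<le> t \<longrightarrow> t < t' \<longrightarrow> t' \<le> 1 \<longrightarrow>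
        t' \<le> t + \<delta> \<longrightarrow> f t' \<le> f t + \<epsilon>"
      using jumps[OF \<open>0 < \<epsilon>\<close>] by blast
    have "Inf T < s + \<delta>" using \<open>\<delta> > 0\<close> unfolding s_def by simp
    then obtain t where "t \<in> T" "t < s + \<delta>"
      using cInf_lessD[of T "s + \<delta>"] \<open>1 \<in> T\<close> by blast
    then have "s \<le> t" "t \<le> 1" "a \<le> f t"
      using cInf_lower[OF _ bdd] unfolding s_def T_def by auto
    show ?thesis
    proof (cases "s = t")
      case True
      with \<open>a \<le> f t\<close> \<open>0 < \<epsilon>\<close> show ?thesis by simp
    next
      case False
      then have "f t \<le> f s + \<epsilon>"
        using \<delta>[rule_format, of s t] \<open>0 \<le> s\<close> \<open>s \<le> t\<close> \<open>t \<le> 1\<close> \<open>t < s + \<delta>\<close> by simp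
      with \<open>a \<le> f t\<close> show ?thesis by simp
    qed
  qed
  have below: "f s \<le> a + \<epsilon>" if "0 < \<epsilon>" for \<epsilon>
  proof (cases "s = 0")
    case True
    with assms(2) that show ?thesis by simp
  next
    case False
    obtain \<delta> where "\<delta> > 0" and \<delta>: "\<forall>t t'. 0 \<le> t \<longrightarrow> t < t' \<longrightarrow> t' \<le> 1 \<longrightarrow>
        t' \<le> t + \<delta> \<longrightarrow> f t' \<le> f t + \<epsilon>"
      using jumps[OF \<open>0 < \<epsilon>\<close>] by blast
    define t where "t = max 0 (s - \<delta>)"
    have "0 \<le> t" "t < s" "s \<le> t + \<delta>"
      using False \<open>0 \<le> s\<close> \<open>\<delta> > 0\<close> unfolding t_def by auto
    have "t \<notin> T"
      using cInf_lower[OF _ bdd, of t] \<open>t < s\<close> unfolding s_def by linarith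
    then have "f t < a" using \<open>0 \<le> t\<close> \<open>t < s\<close> \<open>s \<le> 1\<close> unfolding T_def by simp
    moreover have "f s \<le> f t + \<epsilon>"
      using \<delta>[rule_format, of t s] \<open>0 \<le> t\<close> \<open>t < s\<close> \<open>s \<le> 1\<close> \<open>s \<le> t + \<delta>\<close> by simp
    ultimately show ?thesis by simp
  qed
  have "f s = a"
    using field_le_epsilon[of "f s" a] field_le_epsilon[of a "f s"] above below by simp
  with \<open>0 \<le> s\<close> \<open>s \<le> 1\<close> show ?thesis by blast
qed

text \<open>The shift is c + m rather than c because dil only admits positive shifts.\<close>

lemma residue_class_eq_dil:
  fixes m c :: int
  assumes "0 < m" "\<forall>x\<in>T. x mod m = c"
  shows "T = dil m (c + m) ((\<lambda>x. x div m - 1) ` T)"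
proof -
  have "m * (x div m - 1) + (c + m) = x" if "x \<in> T" for x
    using assms that div_mult_mod_eq[of x m] by (simp add: algebra_simps)
  then show ?thesis unfolding dil_def image_image by simp
qed

locale upper_quasi_density_space =
  fixes H :: "int set" and \<mu> :: "int set \<Rightarrow> real"
  assumes admissible: "admissible_H H" and uqd: "upper_quasi_density H \<mu>"
begin

lemma mu_le_1: "X \<subseteq> H \<Longrightarrow> \<mu> X \<le> 1"
  using uqd unfolding upper_quasi_density_def by (elim conjE) simp

lemma mu_subadditive: "X \<subseteq> H \<Longrightarrow> Y \<subseteq> H \<Longrightarrow> \<mu> (X \<union> Y) \<le> \<mu> X + \<mu> Y"
  using uqd unfolding upper_quasi_density_def by (elim conjE) simp

lemma mu_dil: "X \<subseteq> H \<Longrightarrow> 1 \<le> h \<Longrightarrow> 1 \<le> k \<Longrightarrow> \<mu> (dil k h X) = \<mu> X / k"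
  using uqd unfolding upper_quasi_density_def by (elim conjE) simp

lemma mu_nonneg: "X \<subseteq> H \<Longrightarrow> 0 \<le> \<mu> X"
  using mu_subadditive[of X X] by simp

lemma mu_empty: "\<mu> {} = 0"
proof -
  have "dil 2 1 {} = {}" by (simp add: dil_def)
  then have "\<mu> {} = \<mu> {} / 2" using mu_dil[of "{}" 1 2] by simp
  then show ?thesis by simp
qed

lemma mu_singleton: "x \<in> H \<Longrightarrow> \<mu> {x} = 0"
proof -
  have nonneg_singleton: "\<mu> {y} = 0" if "y \<in> H" "0 \<le> y" for y
  proof -
    have "dil 2 1 {y} = {2 * y + 1}" "dil 1 (y + 1) {y} = {2 * y + 1}" by (simp_all add: dil_def)
    then have "\<mu> {y} / 2 = \<mu> {y}" using mu_dil[of "{y}" 1 2] mu_dil[of "{y}" "y + 1" 1] that by simp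
    then show ?thesis by simp
  qed
  assume "x \<in> H"
  show ?thesis
  proof (cases "0 \<le> x")
    case False
    with \<open>x \<in> H\<close> admissible have "H = UNIV" unfolding admissible_H_def by auto
    moreover have "dil 1 (-x) {x} = {0}" by (simp add: dil_def)
    ultimately have "\<mu> {0} = \<mu> {x}" using mu_dil[of "{x}" "-x" 1] False by simp
    with nonneg_singleton[of 0] \<open>H = UNIV\<close> show ?thesis by simp
  qed (use nonneg_singleton \<open>x \<in> H\<close> in blast)
qed

lemma mu_finite: "finite F \<Longrightarrow> F \<subseteq> H \<Longrightarrow> \<mu> F = 0"
proof (induction F rule: finite_induct)
  case (insert x F)
  then have "\<mu> (insert x F) \<le> \<mu> {x} + \<mu> F"
    using mu_subadditive[of "{x}" F] by simp
  also have "\<dots> = 0" using insert mu_singleton[of x] by simp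
  finally show ?case using mu_nonneg[of "insert x F"] insert.prems by linarith
qed (simp add: mu_empty)

lemma mu_residue_class_le:
  assumes "S \<subseteq> H" "1 \<le> m" "\<forall>x\<in>S. x mod m = c"
  shows "\<mu> S \<le> 1 / real_of_int m"
proof -
  have contracted: "\<mu> T \<le> 1 / real_of_int m"
    if "T \<subseteq> S" "(\<lambda>x. x div m - 1) ` T \<subseteq> H" for T
  proof (cases "T = {}")
    case False
    then obtain x where "x \<in> T" by blast
    then have "0 \<le> c" using assms that by force
    have "T = dil m (c + m) ((\<lambda>x. x div m - 1) ` T)"
      using residue_class_eq_dil[of m T c] assms that by auto
    then have "\<mu> T = \<mu> ((\<lambda>x. x div m - 1) ` T) / m"
      using mu_dil[OF that(2), of "c + m" m] \<open>0 \<le> c\<close> assms(2) by simp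
    with mu_le_1[OF that(2)] assms(2) show ?thesis by (simp add: divide_right_mono)
  qed (use assms(2) mu_empty in simp)
  txt \<open>When H is not \<int>, the contraction may leave H, but only on finitely many elements.\<close>
  show ?thesis
  proof (cases "H = UNIV")
    case True
    then show ?thesis using contracted[of S] by simp
  next
    case False
    with admissible have "{1..} \<subseteq> H" "H \<subseteq> {0..}"
      unfolding admissible_H_def by auto
    define S1 where "S1 = {x \<in> S. 2 * m \<le> x}"
    define S2 where "S2 = {x \<in> S. x < 2 * m}"
    have "(\<lambda>x. x div m - 1) ` S1 \<subseteq> H"
    proof
      fix y assume "y \<in> (\<lambda>x. x div m - 1) ` S1"
      then obtain x where "2 * m \<le> x" "y = x div m - 1" unfolding S1_def by auto
      moreover have "2 * m div m \<le> x div m"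
        using \<open>2 * m \<le> x\<close> assms(2) by (intro zdiv_mono1) auto
      ultimately show "y \<in> H" using \<open>{1..} \<subseteq> H\<close> assms(2) by auto
    qed
    then have "\<mu> S1 \<le> 1 / real_of_int m" using contracted[of S1] unfolding S1_def by blast
    moreover have "finite S2"
      using \<open>H \<subseteq> {0..}\<close> assms(1) by (intro finite_subset[of S2 "{0..<2 * m}"]) (auto simp: S2_def)
    then have "\<mu> S2 = 0" using mu_finite assms(1) unfolding S2_def by blast
    moreover have "S = S1 \<union> S2" unfolding S1_def S2_def by auto
    then have "\<mu> S \<le> \<mu> S1 + \<mu> S2"
      using mu_subadditive[of S1 S2] assms(1) unfolding S1_def S2_def by auto
    ultimately show ?thesis by simp
  qed
qed

lemma mu_dyadic_cut_increment:
  assumes "X \<subseteq> H" "t < t'" "t' \<le> t + 1/2^N"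
  shows "\<mu> (dyadic_cut X t' - dyadic_cut X t) \<le> 2 / 2^N"
proof -
  define D where "D = dyadic_cut X t' - dyadic_cut X t"
  define C where "C k = {x \<in> D. reversed_bits N x = k}" for k
  have C_H: "C k \<subseteq> H" for k
    using assms(1) dyadic_cut_subset unfolding C_def D_def by blast
  have C_bound: "\<mu> (C k) \<le> 1 / 2^N" for k
  proof (cases "C k = {}")
    case False
    then obtain y where "y \<in> C k" by blast
    then have "\<forall>x\<in>C k. x mod 2^N = y mod 2^N"
      unfolding C_def by (auto intro: reversed_bits_eq_imp_mod_eq)
    then show ?thesis using mu_residue_class_le[OF C_H, of "2^N"] by simp
  qed (simp add: mu_empty)
  have "D = C \<lfloor>t * 2^N\<rfloor> \<union> C (\<lfloor>t * 2^N\<rfloor> + 1)"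
    using reversed_bits_on_dyadic_cut_increment[OF assms(2,3)] unfolding C_def D_def by blast
  then have "\<mu> D \<le> \<mu> (C \<lfloor>t * 2^N\<rfloor>) + \<mu> (C (\<lfloor>t * 2^N\<rfloor> + 1))"
    using mu_subadditive[OF C_H C_H] by simp
  moreover have "1 / 2^N + 1 / 2^N = (2::real) / 2^N" by simp
  ultimately show ?thesis
    using C_bound[of "\<lfloor>t * 2^N\<rfloor>"] C_bound[of "\<lfloor>t * 2^N\<rfloor> + 1"] unfolding D_def by linarith
qed

lemma mu_dyadic_cut_increment_small:
  assumes "X \<subseteq> H" "0 < \<epsilon>"
  shows "\<exists>\<delta>>0. \<forall>t t'. t < t' \<longrightarrow> t' \<le> t + \<delta> \<longrightarrow>
    \<mu> (dyadic_cut X t' - dyadic_cut X t) \<le> \<epsilon>"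
proof -
  obtain N :: nat where "(1/2)^N < \<epsilon>/2"
    using real_arch_pow_inv[of "\<epsilon>/2" "1/2"] assms(2) by auto
  then have "2 / 2^N < \<epsilon>" by (simp add: power_one_over)
  then show ?thesis
    using mu_dyadic_cut_increment[OF assms(1)] by (intro exI[of _ "1/2^N"]) force
qed

lemma weak_darboux_if_increment_bound:
  assumes increment: "\<And>X t t'. X \<subseteq> H \<Longrightarrow> t < t' \<Longrightarrow>
    f (dyadic_cut X t') \<le> f (dyadic_cut X t) + \<mu> (dyadic_cut X t' - dyadic_cut X t)"
  shows "weak_darboux H f"
  unfolding weak_darboux_def
proof (intro allI impI)
  fix X a assume "X \<subseteq> H" "f {} \<le> a" "a \<le> f X"
  have "\<exists>t. 0 \<le> t \<and> t \<le> 1 \<and> f (dyadic_cut X t) = a"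
  proof (rule intermediate_value_small_upward_jumps)
    fix \<epsilon> :: real assume "0 < \<epsilon>"
    then obtain \<delta> where "\<delta> > 0" and \<delta>: "\<forall>t t'. t < t' \<longrightarrow> t' \<le> t + \<delta> \<longrightarrow>
        \<mu> (dyadic_cut X t' - dyadic_cut X t) \<le> \<epsilon>"
      using mu_dyadic_cut_increment_small[OF \<open>X \<subseteq> H\<close>] by blast
    show "\<exists>\<delta>>0. \<forall>t t'. 0 \<le> t \<longrightarrow> t < t' \<longrightarrow> t' \<le> 1 \<longrightarrow> t' \<le> t + \<delta> \<longrightarrow>
        f (dyadic_cut X t') \<le> f (dyadic_cut X t) + \<epsilon>"
    proof (intro exI[of _ \<delta>] conjI allI impI)
      fix t t' :: real assume "0 \<le> t" "t < t'" "t' \<le> 1" "t' \<le> t + \<delta>"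
      then show "f (dyadic_cut X t') \<le> f (dyadic_cut X t) + \<epsilon>"
        using increment[OF \<open>X \<subseteq> H\<close> \<open>t < t'\<close>] \<delta>[rule_format, of t t'] by linarith
    qed (rule \<open>\<delta> > 0\<close>)
  qed (use \<open>f {} \<le> a\<close> \<open>a \<le> f X\<close> in \<open>simp_all add: dyadic_cut_0 dyadic_cut_1\<close>)
  then show "\<exists>A. A \<subseteq> X \<and> f A = a" using dyadic_cut_subset by blast
qed

lemma weak_darboux_mu: "weak_darboux H \<mu>"
proof (rule weak_darboux_if_increment_bound)
  fix X and t t' :: real assume "X \<subseteq> H" "t < t'"
  let ?A = "dyadic_cut X t" and ?A' = "dyadic_cut X t'"
  have "?A \<union> (?A' - ?A) = ?A'"
    using dyadic_cut_mono[of t t' X] \<open>t < t'\<close> by auto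
  moreover have "\<mu> (?A \<union> (?A' - ?A)) \<le> \<mu> ?A + \<mu> (?A' - ?A)"
    using dyadic_cut_subset \<open>X \<subseteq> H\<close> by (intro mu_subadditive) blast+
  ultimately show "\<mu> ?A' \<le> \<mu> ?A + \<mu> (?A' - ?A)" by simp
qed

lemma weak_darboux_lower_qd: "weak_darboux H (lower_qd H \<mu>)"
proof (rule weak_darboux_if_increment_bound)
  fix X and t t' :: real assume "X \<subseteq> H" "t < t'"
  let ?A = "dyadic_cut X t" and ?A' = "dyadic_cut X t'"
  have "(H - ?A') \<union> (?A' - ?A) = H - ?A"
    using dyadic_cut_mono[of t t' X] dyadic_cut_subset[of X t'] \<open>t < t'\<close> \<open>X \<subseteq> H\<close> by auto
  moreover have "\<mu> ((H - ?A') \<union> (?A' - ?A)) \<le> \<mu> (H - ?A') + \<mu> (?A' - ?A)"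
    using dyadic_cut_subset \<open>X \<subseteq> H\<close> by (intro mu_subadditive) blast+
  ultimately show "lower_qd H \<mu> ?A' \<le> lower_qd H \<mu> ?A + \<mu> (?A' - ?A)"
    unfolding lower_qd_def by simp
qed

end

theorem mainTheorem2:
  fixes H :: "int set" and \<mu> :: "int set \<Rightarrow> real"
  assumes "admissible_H H"
    and "upper_quasi_density H \<mu>"
  shows "weak_darboux H \<mu> \<and> weak_darboux H (lower_qd H \<mu>)"
proof -
  interpret upper_quasi_density_space H \<mu> using assms by unfold_locales
  show ?thesis using weak_darboux_mu weak_darboux_lower_qd by blast
qed

end
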